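(* Assume (A) or (B) and $p>1$. Let $u$ be a solution of problem (P) in $\mathbb{R}^n\times(0,T)$ with $0<T\le\infty$ and initial datum $u_0$. Then there is a constant $C^*$ depending only on $p$ such that $$t^{\frac1{p-1}}\|S(t)u_0w\|_{\infty}\le C^*\quad\text{for all }t\in(0,T).$$
   Context: (A): $w(x)=|x_1|^a$ on $\mathbb{R}^n$ with $a\in[0,1)$; (B): $w(x)=|x|^b$ with $b\in[0,n)$. Problem (P): $\partial_t u-w^{-1}\operatorname{div}(w\nabla u)=u^p$, $u(\cdot,0)=u_0\ge0$. $\Gamma$ is the (positive) fundamental solution of $\partial_t v-w^{-1}\operatorname{div}(w\nabla v)=0$ with pole at $(y,0)$, assumed to satisfy (K1) $\int\Gamma(x,y,t)w(x)dx=\int\Gamma(x,y,t)w(y)dy=1$; (K2) $\Gamma(x,y,t)=\int\Gamma(x,\xi,t-s)\Gamma(\xi,y,s)w(\xi)d\xi$ for $t>s>0$; (K3) $c_*e^{-|x-y|^2/(c_*t)}\le \sqrt{w(B(x,\sqrt t))w(B(y,\sqrt t))}\,\Gamma(x,y,t)\le C_*e^{-|x-y|^2/(C_*t)}$, $w(E)=\int_Ew$. $[S(t)\varphi w](x):=\int\Gamma(x,y,t)\varphi(y)w(y)\,dy$. A solution in $\mathbb{R}^n\times(0,T)$ is a nonnegative measurable $u\in L^\infty(0,T;L^\infty)$ with $u(x,t)=\int\Gamma(x,y,t)u_0(y)w(y)dy+\int_0^t\int\Gamma(x,y,t-s)u(y,s)^pw(y)dyds<\infty$ for a.e. $x$,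 all $t\in(0,T)$. *)

theory Defs
  imports "HOL-Probability.Probability"
begin

text \<open>Points of R^n are represented as extensional functions nat => real supported on
  indices 0..n-1 (coordinate x_1 of the paper is x 0); Lebesgue measure on R^n is the
  product measure of lborel over the index set.\<close>

definition Rn :: "nat \<Rightarrow> (nat \<Rightarrow> real) measure" where
  "Rn n = PiM {..<n} (\<lambda>_. lborel)"

definition enorm :: "nat \<Rightarrow> (nat \<Rightarrow> real) \<Rightarrow> real" where
  "enorm n x = sqrt (\<Sum>i<n. (x i)^2)"

definition edist :: "nat \<Rightarrow> (nat \<Rightarrow> real) \<Rightarrow> (nat \<Rightarrow> real) \<Rightarrow> real" where
  "edist n x y = enorm n (\<lambda>i. x i - y i)"

definition rpow :: "real \<Rightarrow> real \<Rightarrow> real" where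
  "rpow t a = (if a = 0 then 1 else t powr a)"

definition weight_A :: "nat \<Rightarrow> ((nat \<Rightarrow> real) \<Rightarrow> real) \<Rightarrow> bool" where
  "weight_A n w \<longleftrightarrow> (\<exists>a. 0 \<le> a \<and> a < 1 \<and> w = (\<lambda>x. rpow \<bar>x 0\<bar> a))"

definition weight_B :: "nat \<Rightarrow> ((nat \<Rightarrow> real) \<Rightarrow> real) \<Rightarrow> bool" where
  "weight_B n w \<longleftrightarrow> (\<exists>b. 0 \<le> b \<and> b < real n \<and> w = (\<lambda>x. rpow (enorm n x) b))"

definition wmeas :: "nat \<Rightarrow> ((nat \<Rightarrow> real) \<Rightarrow> real) \<Rightarrow> (nat \<Rightarrow> real) set \<Rightarrow> real" where
  "wmeas n w E = enn2real (\<integral>\<^sup>+ y \<in> E. ennreal (w y) \<partial>Rn n)"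

definition wball :: "nat \<Rightarrow> ((nat \<Rightarrow> real) \<Rightarrow> real) \<Rightarrow> (nat \<Rightarrow> real) \<Rightarrow> real \<Rightarrow> real" where
  "wball n w x r = wmeas n w {y \<in> space (Rn n). edist n x y < r}"

definition kernel_ok :: "nat \<Rightarrow> ((nat \<Rightarrow> real) \<Rightarrow> real)
    \<Rightarrow> ((nat \<Rightarrow> real) \<Rightarrow> (nat \<Rightarrow> real) \<Rightarrow> real \<Rightarrow> real) \<Rightarrow> bool" where
  "kernel_ok n w \<Gamma> \<longleftrightarrow>
     (\<lambda>(x, y, t). if 0 < t then \<Gamma> x y t else 0)
        \<in> borel_measurable (Rn n \<Otimes>\<^sub>M Rn n \<Otimes>\<^sub>M lborel)
   \<and> (\<forall>x\<in>space (Rn n). \<forall>y\<in>space (Rn n). \<forall>t>0. 0 < \<Gamma> x y t)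
   \<and> (\<forall>y\<in>space (Rn n). \<forall>t>0.
        (\<integral>\<^sup>+ x. ennreal (\<Gamma> x y t * w x) \<partial>Rn n) = 1)
   \<and> (\<forall>x\<in>space (Rn n). \<forall>t>0.
        (\<integral>\<^sup>+ y. ennreal (\<Gamma> x y t * w y) \<partial>Rn n) = 1)
   \<and> (\<forall>x\<in>space (Rn n). \<forall>y\<in>space (Rn n). \<forall>t s. 0 < s \<and> s < t \<longrightarrow>
        ennreal (\<Gamma> x y t) =
          (\<integral>\<^sup>+ \<xi>. ennreal (\<Gamma> x \<xi> (t - s) * \<Gamma> \<xi> y s * w \<xi>) \<partial>Rn n))
   \<and> (\<exists>c1 C1. 0 < c1 \<and> 0 < C1 \<and>
        (\<forall>x\<in>space (Rn n). \<forall>y\<in>space (Rn n). \<forall>t>0.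
          c1 * exp (- ((edist n x y)^2) / (c1 * t))
            \<le> sqrt (wball n w x (sqrt t) * wball n w y (sqrt t)) * \<Gamma> x y t
        \<and> sqrt (wball n w x (sqrt t) * wball n w y (sqrt t)) * \<Gamma> x y t
            \<le> C1 * exp (- ((edist n x y)^2) / (C1 * t))))"

definition Sop :: "nat \<Rightarrow> ((nat \<Rightarrow> real) \<Rightarrow> real)
    \<Rightarrow> ((nat \<Rightarrow> real) \<Rightarrow> (nat \<Rightarrow> real) \<Rightarrow> real \<Rightarrow> real)
    \<Rightarrow> real \<Rightarrow> ((nat \<Rightarrow> real) \<Rightarrow> real) \<Rightarrow> (nat \<Rightarrow> real) \<Rightarrow> ennreal" where
  "Sop n w \<Gamma> t \<phi> x = (\<integral>\<^sup>+ y. ennreal (\<Gamma> x y t * \<phi> y * w y) \<partial>Rn n)"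

definition is_solution :: "nat \<Rightarrow> ((nat \<Rightarrow> real) \<Rightarrow> real)
    \<Rightarrow> ((nat \<Rightarrow> real) \<Rightarrow> (nat \<Rightarrow> real) \<Rightarrow> real \<Rightarrow> real) \<Rightarrow> real \<Rightarrow> ereal
    \<Rightarrow> ((nat \<Rightarrow> real) \<Rightarrow> real) \<Rightarrow> ((nat \<Rightarrow> real) \<Rightarrow> real \<Rightarrow> real) \<Rightarrow> bool" where
  "is_solution n w \<Gamma> p T u0 u \<longleftrightarrow>
     (\<lambda>(x, t). if 0 < t \<and> ereal t < T then u x t else 0)
        \<in> borel_measurable (Rn n \<Otimes>\<^sub>M lborel)
   \<and> (\<forall>x\<in>space (Rn n). \<forall>t. 0 < t \<and> ereal t < T \<longrightarrow> 0 \<le> u x t)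
   \<and> (\<exists>M. AE t in lborel. 0 < t \<and> ereal t < T \<longrightarrow> (AE x in Rn n. u x t \<le> M))
   \<and> (\<forall>t. 0 < t \<and> ereal t < T \<longrightarrow>
        (AE x in Rn n. ennreal (u x t) =
            Sop n w \<Gamma> t u0 x
          + (\<integral>\<^sup>+ s \<in> {0<..<t}. (\<integral>\<^sup>+ y. ennreal (\<Gamma> x y (t - s) * (u y s) powr p * w y) \<partial>Rn n)
               \<partial>lborel)))"

end

theory Submission
  imports Defs
begin

text \<open>Fix a point \<open>x\<close> and a time \<open>\<tau> < T\<close> and follow \<open>\<psi>(t) = [S(\<tau> - t) u(t) w](x)\<close>
  for \<open>0 < t < \<tau>\<close>. The semigroup property (K2) and the integral equation give
  \<open>\<psi>(t) = a + \<integral>\<^sub>0\<^sup>t [S(\<tau> - s) u(s)\<^sup>p w](x) ds\<close> with \<open>a = [S(\<tau>) u\<^sub>0 w](x)\<close>, and since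
  \<open>S(\<tau> - s)\<close> averages against a probability kernel (K1), Jensen's inequality bounds the integrand
  below by \<open>\<psi>(s)\<^sup>p\<close>. Thus the bounded function \<open>\<psi>\<close> is a supersolution of \<open>\<psi>' = \<psi>\<^sup>p\<close> starting
  at \<open>a\<close>. Such a function doubles from any level \<open>h\<close> within time \<open>h powr (1 - p)\<close>, so it would
  exceed every bound before time \<open>a powr (1 - p) / (1 - 2 powr (1 - p))\<close>; hence
  \<open>\<tau> * a powr (p - 1) \<le> 1 / (1 - 2 powr (1 - p))\<close>.\<close>

lemma AE_lborel_obtain_in_interval:
  assumes "AE s in lborel. P s" and "(a::real) < b"
  obtains s where "a < s" "s < b" "P s"
proof (rule ccontr)
  assume "\<not> thesis"
  then have "AE s in lborel. s \<notin> {a<..<b}" using assms(1) that by (auto elim: AE_mp)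
  then have "emeasure lborel {a<..<b} = 0"
    by (subst (asm) AE_iff_measurable[where N="{a<..<b}"]) auto
  with assms(2) show False by simp
qed

lemma powr_tangent_line_le:
  fixes f c p :: real
  assumes "1 < p" "0 \<le> f" "0 \<le> c"
  shows "p * c powr (p - 1) * f \<le> f powr p + (p - 1) * c powr p"
proof (cases "c = 0")
  case True then show ?thesis using assms by simp
next
  case False
  define q where "q = p / (p - 1)"
  have q: "1 < q" "1/p + 1/q = 1" using assms unfolding q_def by (simp_all add: field_simps)
  have "f * c powr (p - 1) \<le> f powr p / p + (c powr (p - 1)) powr q / q"
    using Youngs_inequality[OF assms(1) q assms(2)] by simp
  also have "(c powr (p - 1)) powr q = c powr p"
    using assms unfolding q_def by (simp add: powr_powr)
  finally have "p * (f * c powr (p - 1)) \<le> p * (f powr p / p + c powr p / q)"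
    using assms by simp
  also have "\<dots> = f powr p + (p - 1) * c powr p"
    using assms unfolding q_def by (simp add: field_simps)
  finally show ?thesis by (simp add: mult_ac)
qed

lemma nn_integral_kernel_tangent_le:
  fixes M :: "'a measure" and k f :: "'a \<Rightarrow> real" and c p :: real
  assumes p: "1 < p" and c: "0 \<le> c"
    and [measurable]: "k \<in> borel_measurable M" "f \<in> borel_measurable M"
    and k0: "\<And>y. y \<in> space M \<Longrightarrow> 0 \<le> k y" and f0: "\<And>y. y \<in> space M \<Longrightarrow> 0 \<le> f y"
    and k_total: "(\<integral>\<^sup>+y. ennreal (k y) \<partial>M) = 1"
  shows "ennreal (p * c powr (p - 1)) * (\<integral>\<^sup>+y. ennreal (k y * f y) \<partial>M)
    \<le> (\<integral>\<^sup>+y. ennreal (k y * f y powr p) \<partial>M) + ennreal ((p - 1) * c powr p)"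
proof -
  have tangent: "ennreal (p * c powr (p - 1)) * ennreal (k y * f y)
      \<le> ennreal (k y * f y powr p) + ennreal ((p - 1) * c powr p) * ennreal (k y)"
    if y: "y \<in> space M" for y
  proof -
    have "k y * (p * c powr (p - 1) * f y) \<le> k y * (f y powr p + (p - 1) * c powr p)"
      using powr_tangent_line_le[OF p f0[OF y] c] k0[OF y] by (rule mult_left_mono)
    then have "ennreal (p * c powr (p - 1) * (k y * f y))
        \<le> ennreal (k y * f y powr p + (p - 1) * c powr p * k y)"
      by (intro ennreal_leI) (simp add: algebra_simps)
    then show ?thesis using p k0[OF y] f0[OF y] c
      by (simp add: ennreal_mult[symmetric] ennreal_plus[symmetric] del: ennreal_plus)
  qed
  have "ennreal (p * c powr (p - 1)) * (\<integral>\<^sup>+y. ennreal (k y * f y) \<partial>M)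
      = (\<integral>\<^sup>+y. ennreal (p * c powr (p - 1)) * ennreal (k y * f y) \<partial>M)"
    by (rule nn_integral_cmult[symmetric]) measurable
  also have "\<dots> \<le> (\<integral>\<^sup>+y. ennreal (k y * f y powr p) + ennreal ((p - 1) * c powr p) * ennreal (k y) \<partial>M)"
    by (rule nn_integral_mono) (rule tangent)
  also have "\<dots> = (\<integral>\<^sup>+y. ennreal (k y * f y powr p) \<partial>M) + ennreal ((p - 1) * c powr p)"
    by (simp add: nn_integral_add nn_integral_cmult k_total)
  finally show ?thesis .
qed

lemma nn_integral_powr_Jensen:
  fixes M :: "'a measure" and k f :: "'a \<Rightarrow> real" and p :: real
  assumes p: "1 < p"
    and [measurable]: "k \<in> borel_measurable M" "f \<in> borel_measurable M"
    and k0: "\<And>y. y \<in> space M \<Longrightarrow> 0 \<le> k y" and f0: "\<And>y. y \<in> space M \<Longrightarrow> 0 \<le> f y"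
    and k_total: "(\<integral>\<^sup>+y. ennreal (k y) \<partial>M) = 1"
  shows "ennreal (enn2real (\<integral>\<^sup>+y. ennreal (k y * f y) \<partial>M) powr p)
    \<le> (\<integral>\<^sup>+y. ennreal (k y * f y powr p) \<partial>M)"
    (is "_ \<le> ?Ifp")
proof (cases "(\<integral>\<^sup>+y. ennreal (k y * f y) \<partial>M) = \<infinity>")
  case True
  then show ?thesis using p by simp
next
  case False
  define c where "c = enn2real (\<integral>\<^sup>+y. ennreal (k y * f y) \<partial>M)"
  have c0: "0 \<le> c" unfolding c_def by simp
  have mean: "(\<integral>\<^sup>+y. ennreal (k y * f y) \<partial>M) = ennreal c"
    unfolding c_def using False by (simp add: less_top)
  have "c powr (p - 1) * c = c powr p"
    using c0 by (cases "c = 0") (simp_all add: powr_diff)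
  then have "ennreal (p * c powr (p - 1)) * ennreal c = ennreal (p * c powr p)"
    using p c0 by (simp add: ennreal_mult[symmetric] mult.assoc)
  then have ineq: "ennreal (p * c powr p) \<le> ?Ifp + ennreal ((p - 1) * c powr p)"
    using nn_integral_kernel_tangent_le[OF p c0 assms(2-)] unfolding mean by simp
  show ?thesis
  proof (cases "?Ifp = \<infinity>")
    case False
    define F where "F = enn2real ?Ifp"
    have F: "?Ifp = ennreal F" "0 \<le> F" unfolding F_def using False by (simp_all add: less_top)
    have "ennreal (p * c powr p) \<le> ennreal (F + (p - 1) * c powr p)"
      using ineq F p by (simp add: ennreal_plus[symmetric] del: ennreal_plus)
    then have "p * c powr p \<le> F + (p - 1) * c powr p"
      using F p by (subst (asm) ennreal_le_iff) auto
    then have "c powr p \<le> F" by (simp add: algebra_simps)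
    then show ?thesis unfolding F(1) c_def[symmetric] by (simp add: ennreal_leI)
  qed simp
qed

definition doubling_constant :: "real \<Rightarrow> real" where
  "doubling_constant p = 1 / (1 - 2 powr (1 - p))"

lemma doubling_constant_pos: "1 < p \<Longrightarrow> 0 < doubling_constant p"
  using powr_less_mono[of "1 - p" 0 2] unfolding doubling_constant_def by simp

lemma sum_doubling_times_le:
  fixes a p :: real
  assumes a: "0 < a" and p: "1 < p"
  shows "(\<Sum>j<k. (2 ^ j * a) powr (1 - p)) \<le> a powr (1 - p) * doubling_constant p"
proof -
  define q where "q = 2 powr (1 - p)"
  have q: "0 < q" "q < 1"
    using p powr_less_mono[of "1 - p" 0 2] unfolding q_def by auto
  have "(2 ^ j * a) powr (1 - p) = a powr (1 - p) * q ^ j" for j :: nat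
    using a unfolding q_def by (simp add: powr_mult powr_powr powr_realpow[symmetric] mult.commute)
  then have "(\<Sum>j<k. (2 ^ j * a) powr (1 - p)) = a powr (1 - p) * ((1 - q ^ k) / (1 - q))"
    using q by (simp add: sum_distrib_left[symmetric] sum_gp_strict)
  also have "\<dots> \<le> a powr (1 - p) * (1 / (1 - q))"
    using q by (intro mult_left_mono divide_right_mono) auto
  finally show ?thesis unfolding q_def doubling_constant_def .
qed

lemma doubling_time_bound:
  fixes G :: "real \<Rightarrow> real" and p \<tau> M :: real
  assumes p: "1 < p" and G0: "0 \<le> G 0"
    and step: "\<And>s t. 0 \<le> s \<Longrightarrow> s < t \<Longrightarrow> t < \<tau> \<Longrightarrow> G s + (t - s) * G s powr p \<le> G t"
    and bounded: "\<And>t. 0 \<le> t \<Longrightarrow> t < \<tau> \<Longrightarrow> G t \<le> M"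
  shows "\<tau> * G 0 powr (p - 1) \<le> doubling_constant p"
proof (cases "G 0 = 0")
  case True
  then show ?thesis using doubling_constant_pos[OF p] by simp
next
  case False
  define a where "a = G 0"
  have a: "0 < a" using False G0 unfolding a_def by simp
  define h where "h k = 2 ^ k * a" for k :: nat
  define tk where "tk k = (\<Sum>j<k. h j powr (1 - p))" for k
  have h_pos: "0 < h k" for k unfolding h_def using a by simp
  have tk_Suc: "tk (Suc k) = tk k + h k powr (1 - p)" for k unfolding tk_def by simp
  have tk_nonneg: "0 \<le> tk k" for k unfolding tk_def by (simp add: sum_nonneg)
  have reached: "tk k < \<tau> \<longrightarrow> h k \<le> G (tk k)" for k
  proof (induction k)
    case 0
    then show ?case by (simp add: tk_def h_def a_def)
  next
    case (Suc k)
    show ?case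
    proof
      assume lt: "tk (Suc k) < \<tau>"
      have "0 < h k powr (1 - p)" using h_pos[of k] by simp
      then have "tk k < \<tau>" using lt tk_Suc[of k] by linarith
      then have IH: "h k \<le> G (tk k)" using Suc by simp
      have "h k powr (1 - p) * h k powr p = h k"
        using h_pos[of k] by (simp add: powr_add[symmetric])
      then have "h (Suc k) = h k + h k powr (1 - p) * h k powr p" unfolding h_def by simp
      also have "\<dots> \<le> G (tk k) + h k powr (1 - p) * G (tk k) powr p"
        using IH h_pos[of k] p by (intro add_mono mult_left_mono powr_mono2) auto
      also have "\<dots> \<le> G (tk (Suc k))"
        using step[of "tk k" "tk (Suc k)"] tk_nonneg[of k] tk_Suc[of k] h_pos[of k] lt by simp
      finally show "h (Suc k) \<le> G (tk (Suc k))" .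
    qed
  qed
  show ?thesis
  proof (rule ccontr)
    assume "\<not> ?thesis"
    then have "a powr (1 - p) * doubling_constant p < \<tau>"
      using a unfolding a_def[symmetric] by (simp add: powr_diff field_simps)
    then have "2 ^ k * a \<le> M" for k
      using reached[of k] bounded[OF tk_nonneg[of k]] sum_doubling_times_le[OF a p, of k]
      unfolding h_def tk_def by simp
    moreover obtain k where "M / a < 2 ^ k" using real_arch_pow[of 2 "M / a"] by auto
    then have "M < 2 ^ k * a" using a by (simp add: pos_divide_less_eq)
    ultimately show False by (metis not_le)
  qed
qed

lemma powr_bound_from_time_bound:
  fixes t a K p :: real
  assumes p: "1 < p" and t: "0 < t" and a: "0 \<le> a" and bound: "t * a powr (p - 1) \<le> K"
  shows "a \<le> (K / t) powr (1 / (p - 1))"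
proof (cases "a = 0")
  case False
  have "a powr (p - 1) \<le> K / t" using bound t by (simp add: pos_le_divide_eq mult.commute)
  then have "(a powr (p - 1)) powr (1 / (p - 1)) \<le> (K / t) powr (1 / (p - 1))"
    using p by (intro powr_mono2) auto
  then show ?thesis using False a p by (simp add: powr_powr)
qed simp

lemma set_nn_integral_add_lower_bound:
  fixes g :: "real \<Rightarrow> ennreal" and c s t :: real
  assumes [measurable]: "g \<in> borel_measurable lborel" and st: "0 \<le> s" "s \<le> t" and c: "0 \<le> c"
    and lower: "AE r in lborel. r \<in> {s<..<t} \<longrightarrow> ennreal c \<le> g r"
  shows "(\<integral>\<^sup>+r\<in>{0<..<s}. g r \<partial>lborel) + ennreal ((t - s) * c) \<le> (\<integral>\<^sup>+r\<in>{0<..<t}. g r \<partial>lborel)"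
proof -
  have "ennreal ((t - s) * c) = (\<integral>\<^sup>+r\<in>{s<..<t}. ennreal c \<partial>lborel)"
    using st c by (simp add: nn_integral_cmult_indicator ennreal_mult mult.commute)
  also have "\<dots> \<le> (\<integral>\<^sup>+r\<in>{s<..<t}. g r \<partial>lborel)"
    using lower by (intro nn_integral_mono_AE) (auto elim!: eventually_mono split: split_indicator)
  finally have "(\<integral>\<^sup>+r\<in>{0<..<s}. g r \<partial>lborel) + ennreal ((t - s) * c)
      \<le> (\<integral>\<^sup>+r\<in>{0<..<s}. g r \<partial>lborel) + (\<integral>\<^sup>+r\<in>{s<..<t}. g r \<partial>lborel)"
    by (rule add_left_mono)
  also have "\<dots> = (\<integral>\<^sup>+r\<in>{0<..<s} \<union> {s<..<t}. g r \<partial>lborel)"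
    by (rule nn_integral_disjoint_pair[symmetric]) auto
  also have "\<dots> \<le> (\<integral>\<^sup>+r\<in>{0<..<t}. g r \<partial>lborel)"
    using st by (intro nn_set_integral_set_mono) auto
  finally show ?thesis .
qed

lemma integral_inequality_time_bound:
  fixes \<psi> :: "real \<Rightarrow> ennreal" and a :: ennreal and p \<tau> M :: real
  assumes p: "1 < p" and \<tau>: "0 < \<tau>"
    and [measurable]: "\<psi> \<in> borel_measurable lborel"
    and supersolution: "\<And>t. 0 < t \<Longrightarrow> t < \<tau> \<Longrightarrow>
      a + (\<integral>\<^sup>+s\<in>{0<..<t}. ennreal (enn2real (\<psi> s) powr p) \<partial>lborel) \<le> \<psi> t"
    and bounded: "AE s in lborel. 0 < s \<and> s < \<tau> \<longrightarrow> \<psi> s \<le> ennreal M"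
  shows "a \<noteq> \<infinity> \<and> \<tau> * enn2real a powr (p - 1) \<le> doubling_constant p"
proof -
  define g where "g s = ennreal (enn2real (\<psi> s) powr p)" for s
  have [measurable]: "g \<in> borel_measurable lborel" unfolding g_def by measurable
  define G where "G t = a + (\<integral>\<^sup>+s\<in>{0<..<t}. g s \<partial>lborel)" for t
  have G_le_\<psi>: "G t \<le> \<psi> t" if "0 < t" "t < \<tau>" for t
    using supersolution[OF that] unfolding G_def g_def .
  have G_mono: "G s \<le> G t" if "s \<le> t" for s t
    unfolding G_def using that by (intro add_left_mono nn_set_integral_set_mono) auto
  have G_bounded: "G t \<le> ennreal (max M 0)" if "0 \<le> t" "t < \<tau>" for t
  proof -
    obtain t' where t': "t < t'" "t' < \<tau>" "0 < t' \<and> t' < \<tau> \<longrightarrow> \<psi> t' \<le> ennreal M"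
      using AE_lborel_obtain_in_interval[OF bounded \<open>t < \<tau>\<close>] by blast
    have "G t \<le> \<psi> t'" using G_mono[of t t'] G_le_\<psi>[of t'] t' that by simp
    also have "\<dots> \<le> ennreal (max M 0)" using t' that by (simp add: ennreal_leI order_trans)
    finally show ?thesis .
  qed
  define Gr where "Gr t = enn2real (G t)" for t
  have Gr_nonneg: "0 \<le> Gr t" for t unfolding Gr_def by simp
  have G_finite: "G t = ennreal (Gr t)" if "0 \<le> t" "t < \<tau>" for t
    using le_less_trans[OF G_bounded[OF that] ennreal_less_top] unfolding Gr_def by simp
  have Gr_bounded: "Gr t \<le> max M 0" if "0 \<le> t" "t < \<tau>" for t
    unfolding Gr_def using G_bounded[OF that] by (intro enn2real_leI) auto
  have step: "Gr s + (t - s) * Gr s powr p \<le> Gr t" if st: "0 \<le> s" "s < t" "t < \<tau>" for s t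
  proof -
    text \<open>Beyond time \<open>s\<close> the integrand dominates \<open>G s powr p\<close>, because \<open>G\<close> is increasing
      and lies below \<open>\<psi>\<close>, which is finite almost everywhere.\<close>
    have "AE r in lborel. r \<in> {s<..<t} \<longrightarrow> ennreal (Gr s powr p) \<le> g r"
      using bounded
    proof eventually_elim
      case (elim r)
      show ?case
      proof
        assume r: "r \<in> {s<..<t}"
        then have "G s \<le> \<psi> r" "\<psi> r < \<infinity>"
          using st G_mono[of s r] G_le_\<psi>[of r] elim by (auto simp: le_less_trans)
        then have "Gr s \<le> enn2real (\<psi> r)" unfolding Gr_def by (simp add: enn2real_mono)
        then show "ennreal (Gr s powr p) \<le> g r"
          unfolding g_def using p by (intro ennreal_leI powr_mono2) (auto simp: Gr_def)
      qed
    qed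
    then have "G s + ennreal ((t - s) * Gr s powr p) \<le> G t"
      using set_nn_integral_add_lower_bound[of g s t] st unfolding G_def add.assoc
      by (intro add_left_mono) simp
    then have "ennreal (Gr s + (t - s) * Gr s powr p) \<le> ennreal (Gr t)"
      using st G_finite[of s] G_finite[of t] Gr_nonneg[of s] by (simp add: ennreal_plus)
    then show ?thesis using Gr_nonneg[of t] by simp
  qed
  have "\<tau> * Gr 0 powr (p - 1) \<le> doubling_constant p"
    by (rule doubling_time_bound[OF p Gr_nonneg step Gr_bounded])
  moreover have "a = ennreal (Gr 0)" using G_finite[of 0] \<tau> unfolding G_def by simp
  ultimately show ?thesis using Gr_nonneg[of 0] by simp
qed

lemma sigma_finite_Rn: "sigma_finite_measure (Rn n)"
  unfolding Rn_def
  by (simp add: product_sigma_finite.sigma_finite product_sigma_finite_def lborel.sigma_finite_measure_axioms)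

lemma weight_measurable_nonneg:
  assumes "1 \<le> n" and "weight_A n w \<or> weight_B n w"
  shows "w \<in> borel_measurable (Rn n)" and "\<And>x. 0 \<le> w x"
  using assms unfolding weight_A_def weight_B_def rpow_def Rn_def enorm_def by auto

locale weighted_kernel =
  fixes n :: nat and w :: "(nat \<Rightarrow> real) \<Rightarrow> real"
    and \<Gamma> :: "(nat \<Rightarrow> real) \<Rightarrow> (nat \<Rightarrow> real) \<Rightarrow> real \<Rightarrow> real"
  assumes kernel_ok: "kernel_ok n w \<Gamma>"
    and w_measurable: "w \<in> borel_measurable (Rn n)"
    and w_nonneg: "0 \<le> w x"
begin

declare w_measurable[measurable]

sublocale Rn: sigma_finite_measure "Rn n"
  by (rule sigma_finite_Rn)

sublocale Rn_Rn: pair_sigma_finite "Rn n" "Rn n" ..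

sublocale Rn_lborel: pair_sigma_finite "Rn n" lborel ..

text \<open>The extension by \<open>0\<close> to \<open>t \<le> 0\<close> is the form in which \<open>kernel_ok\<close> makes \<open>\<Gamma>\<close>
  jointly measurable in \<open>(x, y, t)\<close>.\<close>
definition heat_kernel :: "(nat \<Rightarrow> real) \<times> (nat \<Rightarrow> real) \<times> real \<Rightarrow> real" where
  "heat_kernel = (\<lambda>(x, y, t). if 0 < t then \<Gamma> x y t else 0)"

lemma heat_kernel_measurable[measurable]:
  "heat_kernel \<in> borel_measurable (Rn n \<Otimes>\<^sub>M Rn n \<Otimes>\<^sub>M lborel)"
  using kernel_ok unfolding kernel_ok_def heat_kernel_def by simp

lemma heat_kernel_nonneg:
  "x \<in> space (Rn n) \<Longrightarrow> y \<in> space (Rn n) \<Longrightarrow> 0 \<le> heat_kernel (x, y, t)"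
  using kernel_ok unfolding kernel_ok_def heat_kernel_def by (auto intro: less_imp_le)

lemma heat_kernel_total:
  "x \<in> space (Rn n) \<Longrightarrow> 0 < t \<Longrightarrow> (\<integral>\<^sup>+y. ennreal (heat_kernel (x, y, t) * w y) \<partial>Rn n) = 1"
  using kernel_ok unfolding kernel_ok_def heat_kernel_def by simp

lemma heat_kernel_Chapman_Kolmogorov:
  assumes "x \<in> space (Rn n)" "\<xi> \<in> space (Rn n)" "0 < s" "s < t"
  shows "(\<integral>\<^sup>+y. ennreal (heat_kernel (x, y, t - s) * heat_kernel (y, \<xi>, s) * w y) \<partial>Rn n)
    = ennreal (heat_kernel (x, \<xi>, t))"
  using assms kernel_ok unfolding kernel_ok_def heat_kernel_def by simp

lemma Sop_eq_heat_kernel: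
  "0 < t \<Longrightarrow> Sop n w \<Gamma> t \<phi> x = (\<integral>\<^sup>+y. ennreal (heat_kernel (x, y, t) * (\<phi> y * w y)) \<partial>Rn n)"
  unfolding Sop_def heat_kernel_def by (simp add: mult.assoc)

lemma Sop_measurable:
  assumes "0 < t" and [measurable]: "\<phi> \<in> borel_measurable (Rn n)"
  shows "Sop n w \<Gamma> t \<phi> \<in> borel_measurable (Rn n)"
proof -
  have "Sop n w \<Gamma> t \<phi> = (\<lambda>x. \<integral>\<^sup>+y. ennreal (heat_kernel (x, y, t) * (\<phi> y * w y)) \<partial>Rn n)"
    using assms(1) by (intro ext Sop_eq_heat_kernel)
  also have "\<dots> \<in> borel_measurable (Rn n)" by measurable
  finally show ?thesis .
qed

lemma heat_kernel_semigroup: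
  assumes x[measurable]: "x \<in> space (Rn n)" and st: "0 < s" "s < t"
    and [measurable]: "h \<in> borel_measurable (Rn n)" and h0: "\<And>\<xi>. \<xi> \<in> space (Rn n) \<Longrightarrow> 0 \<le> h \<xi>"
  shows "(\<integral>\<^sup>+y. ennreal (heat_kernel (x, y, t - s) * w y)
        * (\<integral>\<^sup>+\<xi>. ennreal (heat_kernel (y, \<xi>, s) * h \<xi>) \<partial>Rn n) \<partial>Rn n)
    = (\<integral>\<^sup>+\<xi>. ennreal (heat_kernel (x, \<xi>, t) * h \<xi>) \<partial>Rn n)"
proof -
  have "(\<integral>\<^sup>+y. ennreal (heat_kernel (x, y, t - s) * w y)
        * (\<integral>\<^sup>+\<xi>. ennreal (heat_kernel (y, \<xi>, s) * h \<xi>) \<partial>Rn n) \<partial>Rn n)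
      = (\<integral>\<^sup>+y. \<integral>\<^sup>+\<xi>. ennreal (heat_kernel (x, y, t - s) * w y)
        * ennreal (heat_kernel (y, \<xi>, s) * h \<xi>) \<partial>Rn n \<partial>Rn n)"
    by (intro nn_integral_cong nn_integral_cmult[symmetric]) measurable
  also have "\<dots> = (\<integral>\<^sup>+\<xi>. \<integral>\<^sup>+y. ennreal (heat_kernel (x, y, t - s) * w y)
        * ennreal (heat_kernel (y, \<xi>, s) * h \<xi>) \<partial>Rn n \<partial>Rn n)"
    by (rule Rn_Rn.Fubini'[symmetric]) measurable
  also have "\<dots> = (\<integral>\<^sup>+\<xi>. ennreal (heat_kernel (x, \<xi>, t) * h \<xi>) \<partial>Rn n)"
  proof (rule nn_integral_cong)
    fix \<xi> assume \<xi>: "\<xi> \<in> space (Rn n)"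
    have "(\<integral>\<^sup>+y. ennreal (heat_kernel (x, y, t - s) * w y) * ennreal (heat_kernel (y, \<xi>, s) * h \<xi>) \<partial>Rn n)
        = (\<integral>\<^sup>+y. ennreal (heat_kernel (x, y, t - s) * heat_kernel (y, \<xi>, s) * w y) * ennreal (h \<xi>) \<partial>Rn n)"
      using x \<xi> h0[OF \<xi>]
      by (intro nn_integral_cong) (simp add: ennreal_mult'[symmetric] heat_kernel_nonneg w_nonneg mult_ac)
    also have "\<dots> = (\<integral>\<^sup>+y. ennreal (heat_kernel (x, y, t - s) * heat_kernel (y, \<xi>, s) * w y) \<partial>Rn n)
        * ennreal (h \<xi>)"
      using \<xi> by (intro nn_integral_multc) measurable
    also have "\<dots> = ennreal (heat_kernel (x, \<xi>, t) * h \<xi>)"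
      using x \<xi> st h0[OF \<xi>]
      by (simp add: heat_kernel_Chapman_Kolmogorov ennreal_mult heat_kernel_nonneg)
    finally show "(\<integral>\<^sup>+y. ennreal (heat_kernel (x, y, t - s) * w y)
        * ennreal (heat_kernel (y, \<xi>, s) * h \<xi>) \<partial>Rn n) = ennreal (heat_kernel (x, \<xi>, t) * h \<xi>)" .
  qed
  finally show ?thesis .
qed

text \<open>The Duhamel term \<open>\<integral>\<^sub>0\<^sup>t [S(t - s) F(s)](x) ds\<close>; the weight \<open>w\<close> is part of \<open>F\<close>.\<close>
definition Duhamel :: "((nat \<Rightarrow> real) \<times> real \<Rightarrow> real) \<Rightarrow> real \<Rightarrow> (nat \<Rightarrow> real) \<Rightarrow> ennreal" where
  "Duhamel F t x = (\<integral>\<^sup>+s\<in>{0<..<t}. (\<integral>\<^sup>+\<xi>. ennreal (heat_kernel (x, \<xi>, t - s) * F (\<xi>, s)) \<partial>Rn n) \<partial>lborel)"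

lemma Duhamel_measurable[measurable]:
  assumes [measurable]: "F \<in> borel_measurable (Rn n \<Otimes>\<^sub>M lborel)"
  shows "Duhamel F t \<in> borel_measurable (Rn n)"
  unfolding Duhamel_def by measurable

lemma heat_kernel_semigroup_Duhamel:
  assumes x[measurable]: "x \<in> space (Rn n)" and t: "0 < t" "t < \<tau>"
    and [measurable]: "F \<in> borel_measurable (Rn n \<Otimes>\<^sub>M lborel)"
    and F0: "\<And>\<xi> s. \<xi> \<in> space (Rn n) \<Longrightarrow> 0 \<le> F (\<xi>, s)"
  shows "(\<integral>\<^sup>+y. ennreal (heat_kernel (x, y, \<tau> - t) * w y) * Duhamel F t y \<partial>Rn n)
    = (\<integral>\<^sup>+s\<in>{0<..<t}. (\<integral>\<^sup>+\<xi>. ennreal (heat_kernel (x, \<xi>, \<tau> - s) * F (\<xi>, s)) \<partial>Rn n) \<partial>lborel)"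
proof -
  define c where "c y = ennreal (heat_kernel (x, y, \<tau> - t) * w y)" for y
  define S where "S y s = (\<integral>\<^sup>+\<xi>. ennreal (heat_kernel (y, \<xi>, t - s) * F (\<xi>, s)) \<partial>Rn n)" for y s
  have [measurable]: "c \<in> borel_measurable (Rn n)" unfolding c_def by measurable
  have [measurable]: "(\<lambda>(y, s). S y s) \<in> borel_measurable (Rn n \<Otimes>\<^sub>M lborel)" unfolding S_def by measurable
  have "(\<integral>\<^sup>+y. c y * Duhamel F t y \<partial>Rn n) = (\<integral>\<^sup>+y. \<integral>\<^sup>+s. c y * (S y s * indicator {0<..<t} s) \<partial>lborel \<partial>Rn n)"
    unfolding Duhamel_def S_def by (intro nn_integral_cong nn_integral_cmult[symmetric]) measurable
  also have "\<dots> = (\<integral>\<^sup>+s. \<integral>\<^sup>+y. c y * (S y s * indicator {0<..<t} s) \<partial>Rn n \<partial>lborel)"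
    by (rule Rn_lborel.Fubini'[symmetric]) measurable
  also have "\<dots> = (\<integral>\<^sup>+s\<in>{0<..<t}. \<integral>\<^sup>+y. c y * S y s \<partial>Rn n \<partial>lborel)"
    by (intro nn_integral_cong) (simp split: split_indicator)
  also have "\<dots> = (\<integral>\<^sup>+s\<in>{0<..<t}. (\<integral>\<^sup>+\<xi>. ennreal (heat_kernel (x, \<xi>, \<tau> - s) * F (\<xi>, s)) \<partial>Rn n) \<partial>lborel)"
  proof (rule set_nn_integral_cong)
    fix s assume "s \<in> space lborel \<inter> {0<..<t}"
    then have s: "0 < t - s" "t - s < \<tau> - s" and "\<tau> - t = (\<tau> - s) - (t - s)" using t by auto
    then show "(\<integral>\<^sup>+y. c y * S y s \<partial>Rn n) = (\<integral>\<^sup>+\<xi>. ennreal (heat_kernel (x, \<xi>, \<tau> - s) * F (\<xi>, s)) \<partial>Rn n)"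
      unfolding c_def S_def using heat_kernel_semigroup[OF x s, of "\<lambda>\<xi>. F (\<xi>, s)"] F0 by simp
  qed simp_all
  finally show ?thesis unfolding c_def .
qed

end

locale mild_solution = weighted_kernel +
  fixes p :: real and T :: ereal
    and u0 :: "(nat \<Rightarrow> real) \<Rightarrow> real" and u :: "(nat \<Rightarrow> real) \<Rightarrow> real \<Rightarrow> real"
  assumes p: "1 < p"
    and u0_measurable: "u0 \<in> borel_measurable (Rn n)"
    and u0_nonneg: "\<And>x. x \<in> space (Rn n) \<Longrightarrow> 0 \<le> u0 x"
    and solution: "is_solution n w \<Gamma> p T u0 u"
begin

declare u0_measurable[measurable]

definition solution_ext :: "(nat \<Rightarrow> real) \<times> real \<Rightarrow> real" where
  "solution_ext = (\<lambda>(x, t). if 0 < t \<and> ereal t < T then u x t else 0)"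

lemma solution_ext_measurable[measurable]: "solution_ext \<in> borel_measurable (Rn n \<Otimes>\<^sub>M lborel)"
  using solution unfolding is_solution_def solution_ext_def by simp

lemma solution_ext_nonneg: "x \<in> space (Rn n) \<Longrightarrow> 0 \<le> solution_ext (x, t)"
  using solution unfolding is_solution_def solution_ext_def by auto

lemma solution_ext_bounded:
  obtains M where "AE t in lborel. 0 < t \<and> ereal t < T \<longrightarrow> (AE x in Rn n. solution_ext (x, t) \<le> M)"
proof -
  obtain M where M: "AE t in lborel. 0 < t \<and> ereal t < T \<longrightarrow> (AE x in Rn n. u x t \<le> M)"
    using solution unfolding is_solution_def by blast
  show ?thesis
    by (rule that[of M]) (use M in \<open>auto elim!: eventually_mono simp: solution_ext_def\<close>)
qed

definition source :: "(nat \<Rightarrow> real) \<times> real \<Rightarrow> real" where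
  "source = (\<lambda>(x, t). solution_ext (x, t) powr p * w x)"

lemma source_measurable[measurable]: "source \<in> borel_measurable (Rn n \<Otimes>\<^sub>M lborel)"
  unfolding source_def by measurable

lemma source_nonneg: "0 \<le> source (x, t)"
  unfolding source_def by (simp add: w_nonneg)

lemma integral_equation:
  assumes t: "0 < t" "ereal t < T"
  shows "AE x in Rn n. ennreal (solution_ext (x, t)) = Sop n w \<Gamma> t u0 x + Duhamel source t x"
proof -
  have "AE x in Rn n. ennreal (u x t) = Sop n w \<Gamma> t u0 x
      + (\<integral>\<^sup>+s\<in>{0<..<t}. (\<integral>\<^sup>+\<xi>. ennreal (\<Gamma> x \<xi> (t - s) * (u \<xi> s) powr p * w \<xi>) \<partial>Rn n) \<partial>lborel)"
    using solution t unfolding is_solution_def by blast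
  moreover have "(\<integral>\<^sup>+s\<in>{0<..<t}. (\<integral>\<^sup>+\<xi>. ennreal (\<Gamma> x \<xi> (t - s) * (u \<xi> s) powr p * w \<xi>) \<partial>Rn n) \<partial>lborel)
      = Duhamel source t x" for x
    unfolding Duhamel_def
  proof (rule set_nn_integral_cong)
    fix s assume "s \<in> space lborel \<inter> {0<..<t}"
    then have "0 < s" "s < t" "ereal s < T" using t order.strict_trans[of "ereal s" "ereal t" T] by auto
    then show "(\<integral>\<^sup>+\<xi>. ennreal (\<Gamma> x \<xi> (t - s) * (u \<xi> s) powr p * w \<xi>) \<partial>Rn n)
        = (\<integral>\<^sup>+\<xi>. ennreal (heat_kernel (x, \<xi>, t - s) * source (\<xi>, s)) \<partial>Rn n)"
      by (simp add: heat_kernel_def source_def solution_ext_def mult.assoc)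
  qed simp_all
  ultimately show ?thesis using t by (auto elim!: eventually_mono simp: solution_ext_def)
qed

definition smoothed_solution :: "(nat \<Rightarrow> real) \<Rightarrow> real \<Rightarrow> real \<Rightarrow> ennreal" where
  "smoothed_solution x \<tau> t = (\<integral>\<^sup>+y. ennreal (heat_kernel (x, y, \<tau> - t) * w y * solution_ext (y, t)) \<partial>Rn n)"

definition smoothed_source :: "(nat \<Rightarrow> real) \<Rightarrow> real \<Rightarrow> real \<Rightarrow> ennreal" where
  "smoothed_source x \<tau> s = (\<integral>\<^sup>+\<xi>. ennreal (heat_kernel (x, \<xi>, \<tau> - s) * source (\<xi>, s)) \<partial>Rn n)"

lemma smoothed_solution_measurable[measurable]:
  assumes [measurable]: "x \<in> space (Rn n)"
  shows "smoothed_solution x \<tau> \<in> borel_measurable lborel"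
  unfolding smoothed_solution_def by measurable

lemma smoothed_solution_Duhamel:
  assumes x: "x \<in> space (Rn n)" and t: "0 < t" "t < \<tau>" and \<tau>: "ereal \<tau> < T"
  shows "smoothed_solution x \<tau> t = Sop n w \<Gamma> \<tau> u0 x + (\<integral>\<^sup>+s\<in>{0<..<t}. smoothed_source x \<tau> s \<partial>lborel)"
proof -
  have tT: "ereal t < T" using t \<tau> order.strict_trans[of "ereal t" "ereal \<tau>" T] by simp
  define c where "c y = ennreal (heat_kernel (x, y, \<tau> - t) * w y)" for y
  have [measurable]: "c \<in> borel_measurable (Rn n)" "Sop n w \<Gamma> t u0 \<in> borel_measurable (Rn n)"
    unfolding c_def using x t by (auto intro: Sop_measurable)
  have "smoothed_solution x \<tau> t = (\<integral>\<^sup>+y. c y * ennreal (solution_ext (y, t)) \<partial>Rn n)"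
    unfolding smoothed_solution_def c_def using x
    by (intro nn_integral_cong) (simp add: ennreal_mult heat_kernel_nonneg w_nonneg solution_ext_nonneg)
  also have "\<dots> = (\<integral>\<^sup>+y. c y * (Sop n w \<Gamma> t u0 y + Duhamel source t y) \<partial>Rn n)"
    using integral_equation[OF t(1) tT] by (intro nn_integral_cong_AE) (auto elim!: eventually_mono)
  also have "\<dots> = (\<integral>\<^sup>+y. c y * Sop n w \<Gamma> t u0 y \<partial>Rn n) + (\<integral>\<^sup>+y. c y * Duhamel source t y \<partial>Rn n)"
    by (simp add: distrib_left nn_integral_add)
  also have "(\<integral>\<^sup>+y. c y * Sop n w \<Gamma> t u0 y \<partial>Rn n) = Sop n w \<Gamma> \<tau> u0 x"
    using heat_kernel_semigroup[OF x t, of "\<lambda>y. u0 y * w y"] t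
    by (simp add: c_def Sop_eq_heat_kernel u0_nonneg w_nonneg)
  also have "(\<integral>\<^sup>+y. c y * Duhamel source t y \<partial>Rn n) = (\<integral>\<^sup>+s\<in>{0<..<t}. smoothed_source x \<tau> s \<partial>lborel)"
    unfolding c_def smoothed_source_def
    by (rule heat_kernel_semigroup_Duhamel[OF x t]) (auto simp: source_nonneg)
  finally show ?thesis .
qed

lemma smoothed_solution_powr_le:
  assumes x: "x \<in> space (Rn n)" and s: "s < \<tau>"
  shows "ennreal (enn2real (smoothed_solution x \<tau> s) powr p) \<le> smoothed_source x \<tau> s"
proof -
  have "(\<integral>\<^sup>+y. ennreal (heat_kernel (x, y, \<tau> - s) * w y) \<partial>Rn n) = 1"
    using x s by (simp add: heat_kernel_total)
  then show ?thesis
    using nn_integral_powr_Jensen[OF p,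
        of "\<lambda>y. heat_kernel (x, y, \<tau> - s) * w y" "Rn n" "\<lambda>y. solution_ext (y, s)"] x
    unfolding smoothed_solution_def smoothed_source_def source_def
    by (simp add: heat_kernel_nonneg w_nonneg solution_ext_nonneg mult_ac)
qed

lemma smoothed_solution_bounded:
  assumes x: "x \<in> space (Rn n)" and \<tau>: "ereal \<tau> < T"
  obtains M where "AE s in lborel. 0 < s \<and> s < \<tau> \<longrightarrow> smoothed_solution x \<tau> s \<le> ennreal M"
proof -
  obtain M where M: "AE s in lborel. 0 < s \<and> ereal s < T \<longrightarrow> (AE y in Rn n. solution_ext (y, s) \<le> M)"
    by (rule solution_ext_bounded)
  have "smoothed_solution x \<tau> s \<le> ennreal (max M 0)"
    if s: "s < \<tau>" and bound: "AE y in Rn n. solution_ext (y, s) \<le> M" for s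
  proof -
    have "AE y in Rn n. ennreal (heat_kernel (x, y, \<tau> - s) * w y * solution_ext (y, s))
        \<le> ennreal (max M 0) * ennreal (heat_kernel (x, y, \<tau> - s) * w y)"
      using bound AE_space
    proof eventually_elim
      case (elim y)
      have k0: "0 \<le> heat_kernel (x, y, \<tau> - s) * w y"
        using x elim by (simp add: heat_kernel_nonneg w_nonneg)
      have "solution_ext (y, s) * (heat_kernel (x, y, \<tau> - s) * w y)
          \<le> max M 0 * (heat_kernel (x, y, \<tau> - s) * w y)"
        using elim k0 by (intro mult_right_mono) auto
      then have "ennreal (heat_kernel (x, y, \<tau> - s) * w y * solution_ext (y, s))
          \<le> ennreal (max M 0 * (heat_kernel (x, y, \<tau> - s) * w y))"
        by (intro ennreal_leI) (simp add: mult.commute)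
      also have "\<dots> = ennreal (max M 0) * ennreal (heat_kernel (x, y, \<tau> - s) * w y)"
        using k0 by (rule ennreal_mult'')
      finally show ?case .
    qed
    then have "smoothed_solution x \<tau> s
        \<le> (\<integral>\<^sup>+y. ennreal (max M 0) * ennreal (heat_kernel (x, y, \<tau> - s) * w y) \<partial>Rn n)"
      unfolding smoothed_solution_def by (rule nn_integral_mono_AE)
    also have "\<dots> = ennreal (max M 0)"
      using x s by (simp add: nn_integral_cmult heat_kernel_total)
    finally show ?thesis .
  qed
  then show ?thesis
    using M \<tau> order.strict_trans[of _ "ereal \<tau>" T]
    by (intro that[of "max M 0"]) (auto elim!: eventually_mono)
qed

lemma Sop_time_bound:
  assumes x: "x \<in> space (Rn n)" and \<tau>: "0 < \<tau>" "ereal \<tau> < T"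
  shows "Sop n w \<Gamma> \<tau> u0 x \<noteq> \<infinity> \<and>
    \<tau> * enn2real (Sop n w \<Gamma> \<tau> u0 x) powr (p - 1) \<le> doubling_constant p"
proof -
  obtain M where bounded: "AE s in lborel. 0 < s \<and> s < \<tau> \<longrightarrow> smoothed_solution x \<tau> s \<le> ennreal M"
    using smoothed_solution_bounded[OF x \<tau>(2)] .
  have "Sop n w \<Gamma> \<tau> u0 x + (\<integral>\<^sup>+s\<in>{0<..<t}. ennreal (enn2real (smoothed_solution x \<tau> s) powr p) \<partial>lborel)
      \<le> smoothed_solution x \<tau> t" if t: "0 < t" "t < \<tau>" for t
    unfolding smoothed_solution_Duhamel[OF x t \<tau>(2)] using t smoothed_solution_powr_le[OF x]
    by (intro add_left_mono nn_integral_mono) (simp split: split_indicator)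
  then show ?thesis
    using x by (intro integral_inequality_time_bound[OF p \<tau>(1) _ _ bounded]) auto
qed

lemma esssup_Sop_le:
  assumes t: "0 < t" "ereal t < T"
  shows "esssup (Rn n) (Sop n w \<Gamma> t u0) \<le> ennreal ((doubling_constant p / t) powr (1 / (p - 1)))"
proof (rule esssup_I)
  show "Sop n w \<Gamma> t u0 \<in> borel_measurable (Rn n)"
    using t by (intro Sop_measurable u0_measurable)
  have "Sop n w \<Gamma> t u0 x \<le> ennreal ((doubling_constant p / t) powr (1 / (p - 1)))"
    if x: "x \<in> space (Rn n)" for x
  proof -
    have finite: "Sop n w \<Gamma> t u0 x \<noteq> \<infinity>"
      and "t * enn2real (Sop n w \<Gamma> t u0 x) powr (p - 1) \<le> doubling_constant p"
      using Sop_time_bound[OF x t] by auto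
    then have "enn2real (Sop n w \<Gamma> t u0 x) \<le> (doubling_constant p / t) powr (1 / (p - 1))"
      using t by (intro powr_bound_from_time_bound[OF p]) auto
    then have "ennreal (enn2real (Sop n w \<Gamma> t u0 x))
        \<le> ennreal ((doubling_constant p / t) powr (1 / (p - 1)))"
      by (rule ennreal_leI)
    with finite show ?thesis by (simp add: less_top)
  qed
  then show "AE x in Rn n. Sop n w \<Gamma> t u0 x \<le> ennreal ((doubling_constant p / t) powr (1 / (p - 1)))"
    by (intro AE_I2)
qed

end

theorem lemma3p1:
  fixes p :: real
  assumes "1 < p"
  shows "\<exists>Cstar::real. \<forall>(n::nat) w \<Gamma> (T::ereal) u0 u.
      1 \<le> n \<and> (weight_A n w \<or> weight_B n w) \<and> kernel_ok n w \<Gamma> \<and> 0 < T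
      \<and> u0 \<in> borel_measurable (Rn n) \<and> (\<forall>x\<in>space (Rn n). 0 \<le> u0 x)
      \<and> is_solution n w \<Gamma> p T u0 u
      \<longrightarrow> (\<forall>t. 0 < t \<and> ereal t < T \<longrightarrow>
            ennreal (t powr (1 / (p - 1))) * esssup (Rn n) (Sop n w \<Gamma> t u0)
              \<le> ennreal Cstar)"
proof (intro exI[of _ "doubling_constant p powr (1 / (p - 1))"] allI impI)
  fix n w \<Gamma> u0 u t and T :: ereal
  assume "1 \<le> n \<and> (weight_A n w \<or> weight_B n w) \<and> kernel_ok n w \<Gamma> \<and> 0 < T
      \<and> u0 \<in> borel_measurable (Rn n) \<and> (\<forall>x\<in>space (Rn n). 0 \<le> u0 x)
      \<and> is_solution n w \<Gamma> p T u0 u"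
    and t: "0 < t \<and> ereal t < T"
  then interpret mild_solution n w \<Gamma> p T u0 u
    using assms weight_measurable_nonneg[of n w] by unfold_locales auto
  have "ennreal (t powr (1 / (p - 1))) * esssup (Rn n) (Sop n w \<Gamma> t u0)
      \<le> ennreal (t powr (1 / (p - 1))) * ennreal ((doubling_constant p / t) powr (1 / (p - 1)))"
    using esssup_Sop_le t by (simp add: mult_left_mono)
  also have "\<dots> = ennreal (doubling_constant p powr (1 / (p - 1)))"
    using t doubling_constant_pos[OF assms] by (simp add: ennreal_mult[symmetric] powr_divide)
  finally show "ennreal (t powr (1 / (p - 1))) * esssup (Rn n) (Sop n w \<Gamma> t u0)
      \<le> ennreal (doubling_constant p powr (1 / (p - 1)))" .
qed

end
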